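(* Let $(X,d,G)$ be a $G$-system and $\{F_n\}$ a tempered Følner sequence of $G$. Then the maps $\mu\mapsto\overline{\mathrm{mdim}}_M(\mu,\{F_n\},d)$ and $\mu\mapsto\underline{\mathrm{mdim}}_M(\mu,\{F_n\},d)$ from $M(X,G)$ to $[0,+\infty]$ are upper semi-continuous (with respect to the weak* topology).
   Context: $G$ is a countably infinite discrete amenable group; $(X,d,G)$ a compact metric space with continuous $G$-action by homeomorphisms. Følner: nonempty finite $F_n$ with $|gF_n\triangle F_n|/|F_n|\to0$; tempered: $|\bigcup_{j<n}F_j^{-1}F_n|\le C|F_n|$ for some $C>0$. $M(X,G)$: invariant Borel probability measures (weak* ); $E(X,G)$: ergodic ones; $\mathrm{co}(E(X,G))$: finite convex combinations, uniquely written $\mu=\sum_j\lambda_j\mu_j$ with distinct ergodic $\mu_j$, $\lambda_j>0$. For a finite Borel partition $\alpha$, $h_\nu(G,\alpha)=\lim_n\frac1{|F_n|}H_\nu(\bigvee_{g\in F_n}g^{-1}\alpha)$; for ergodic $\nu$, $h_\nu(\epsilon)=\inf\{h_\nu(G,\alpha):\mathrm{diam}(\alpha)\le\epsilon\}$; $F(\mu,\epsilon)=\sum_j\lambda_jh_{\mu_j}(\epsilon)$. $M_G(\mu)$: families $(\mu_\epsilon)_{\epsilon>0}\subset\mathrm{co}(E(X,G))$ with $\mu_\epsilon\to\mu$ weak* as $\epsilon\to0$. $\overline{\mathrm{mdim}}_M(\mu,\{F_n\},d)=\sup_{(\mu_\epsilon)\in M_G(\mu)}\limsup_{\epsilon\to0}F(\mu_\epsilon,\epsilon)/\log\frac1\epsilon$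 and $\underline{\mathrm{mdim}}_M(\mu,\{F_n\},d)$ is the same with $\liminf_{\epsilon\to0}$. (The paper allows equivalent choices of measure-theoretic $\epsilon$-entropy along $\{F_n\}$, e.g. upper Katok $\epsilon$-entropy, in place of $h_\nu(\epsilon)$.) *)

theory Defs
  imports "HOL-Analysis.Analysis" "HOL-Probability.Probability"
begin

text \<open>The group G is a type of class group_add (written additively, not necessarily
 commutative), countable and infinite; it carries the discrete topology implicitly.
 act g x is the left action g.x on the compact set X of a metric space (metric = dist).\<close>

definition G_system :: "'x::metric_space set \<Rightarrow> ('g::group_add \<Rightarrow> 'x \<Rightarrow> 'x) \<Rightarrow> bool" where
  "G_system X act \<longleftrightarrow> compact X \<and> X \<noteq> {} \<and>
     (\<forall>x\<in>X. act 0 x = x) \<and>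
     (\<forall>g h. \<forall>x\<in>X. act (g + h) x = act g (act h x)) \<and>
     (\<forall>g. act g ` X \<subseteq> X) \<and>
     (\<forall>g. continuous_on X (act g))"

definition folner :: "(nat \<Rightarrow> 'g::group_add set) \<Rightarrow> bool" where
  "folner F \<longleftrightarrow> (\<forall>n. finite (F n) \<and> F n \<noteq> {}) \<and>
     (\<forall>g. (\<lambda>n. real (card (((+) g ` F n) - F n \<union> (F n - (+) g ` F n))) / real (card (F n)))
            \<longlonglongrightarrow> 0)"

definition tempered :: "(nat \<Rightarrow> 'g::group_add set) \<Rightarrow> bool" where
  "tempered F \<longleftrightarrow> (\<exists>C>0. \<forall>n.
     real (card (\<Union>j<n. {- a + b | a b. a \<in> F j \<and> b \<in> F n})) \<le> C * real (card (F n)))"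

definition PM :: "'x::metric_space set \<Rightarrow> 'x measure set" where
  "PM X = {M. prob_space M \<and> space M = X \<and> sets M = sets (restrict_space borel X)}"

definition invariant_measures :: "'x::metric_space set \<Rightarrow> ('g \<Rightarrow> 'x \<Rightarrow> 'x) \<Rightarrow> 'x measure set" where
  "invariant_measures X act = {M \<in> PM X.
     \<forall>g. \<forall>A\<in>sets M. measure M (act g -` A \<inter> X) = measure M A}"

definition ergodic_measures :: "'x::metric_space set \<Rightarrow> ('g \<Rightarrow> 'x \<Rightarrow> 'x) \<Rightarrow> 'x measure set" where
  "ergodic_measures X act = {M \<in> invariant_measures X act.
     \<forall>A\<in>sets M. (\<forall>g. act g -` A \<inter> X = A) \<longrightarrow> measure M A = 0 \<or> measure M A = 1}"

definition is_ergodic_comb ::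
  "'x::metric_space set \<Rightarrow> ('g \<Rightarrow> 'x \<Rightarrow> 'x) \<Rightarrow> 'x measure \<Rightarrow> 'x measure set \<Rightarrow> ('x measure \<Rightarrow> real) \<Rightarrow> bool" where
  "is_ergodic_comb X act \<mu> E lam \<longleftrightarrow> finite E \<and> E \<noteq> {} \<and> E \<subseteq> ergodic_measures X act \<and>
     (\<forall>\<nu>\<in>E. lam \<nu> > 0) \<and> (\<Sum>\<nu>\<in>E. lam \<nu>) = 1 \<and>
     (\<forall>A\<in>sets \<mu>. measure \<mu> A = (\<Sum>\<nu>\<in>E. lam \<nu> * measure \<nu> A))"

definition co_ergodic :: "'x::metric_space set \<Rightarrow> ('g \<Rightarrow> 'x \<Rightarrow> 'x) \<Rightarrow> 'x measure set" where
  "co_ergodic X act = {\<mu> \<in> PM X. \<exists>E lam. is_ergodic_comb X act \<mu> E lam}"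

definition weak_star :: "'x::metric_space set \<Rightarrow> 'x measure topology" where
  "weak_star X = topology_generated_by
     {{M \<in> PM X. (\<integral>x. f x \<partial>M) \<in> U} | f U. continuous_on X f \<and> open (U :: real set)}"

definition is_partition :: "'x::metric_space set \<Rightarrow> 'x set set \<Rightarrow> bool" where
  "is_partition X \<alpha> \<longleftrightarrow> finite \<alpha> \<and> \<alpha> \<subseteq> sets (restrict_space borel X) \<and>
     disjoint \<alpha> \<and> \<Union>\<alpha> = X"

text \<open>Shannon entropy (natural log; ln 0 = 0 gives 0 log 0 = 0).\<close>
definition part_entropy :: "'x measure \<Rightarrow> 'x set set \<Rightarrow> real" where
  "part_entropy \<nu> \<alpha> = - (\<Sum>A\<in>\<alpha>. measure \<nu> A * ln (measure \<nu> A))"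

definition join_part :: "'x set \<Rightarrow> ('g \<Rightarrow> 'x \<Rightarrow> 'x) \<Rightarrow> 'g set \<Rightarrow> 'x set set \<Rightarrow> 'x set set" where
  "join_part X act F \<alpha> = {(\<Inter>g\<in>F. act g -` c g \<inter> X) \<inter> X | c. \<forall>g\<in>F. c g \<in> \<alpha>} - {{}}"

definition h_part :: "'x set \<Rightarrow> ('g \<Rightarrow> 'x \<Rightarrow> 'x) \<Rightarrow> (nat \<Rightarrow> 'g set) \<Rightarrow> 'x measure \<Rightarrow> 'x set set \<Rightarrow> real" where
  "h_part X act Fs \<nu> \<alpha> = lim (\<lambda>n. part_entropy \<nu> (join_part X act (Fs n) \<alpha>) / real (card (Fs n)))"

definition h_eps :: "'x::metric_space set \<Rightarrow> ('g \<Rightarrow> 'x \<Rightarrow> 'x) \<Rightarrow> (nat \<Rightarrow> 'g set) \<Rightarrow> 'x measure \<Rightarrow> real \<Rightarrow> real" where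
  "h_eps X act Fs \<nu> \<epsilon> = Inf {h_part X act Fs \<nu> \<alpha> | \<alpha>. is_partition X \<alpha> \<and> (\<forall>A\<in>\<alpha>. diameter A \<le> \<epsilon>)}"

text \<open>F(\<mu>,\<epsilon>) for \<mu> in co(E(X,G)), via its unique decomposition.\<close>
definition F_eps :: "'x::metric_space set \<Rightarrow> ('g \<Rightarrow> 'x \<Rightarrow> 'x) \<Rightarrow> (nat \<Rightarrow> 'g set) \<Rightarrow> 'x measure \<Rightarrow> real \<Rightarrow> real" where
  "F_eps X act Fs \<mu> \<epsilon> = (THE s. \<exists>E lam. is_ergodic_comb X act \<mu> E lam \<and>
       s = (\<Sum>\<nu>\<in>E. lam \<nu> * h_eps X act Fs \<nu> \<epsilon>))"

definition MG :: "'x::metric_space set \<Rightarrow> ('g \<Rightarrow> 'x \<Rightarrow> 'x) \<Rightarrow> 'x measure \<Rightarrow> (real \<Rightarrow> 'x measure) set" where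
  "MG X act \<mu> = {m. (\<forall>\<epsilon>>0. m \<epsilon> \<in> co_ergodic X act) \<and> limitin (weak_star X) m \<mu> (at_right 0)}"

definition upper_mdim_M :: "'x::metric_space set \<Rightarrow> ('g \<Rightarrow> 'x \<Rightarrow> 'x) \<Rightarrow> (nat \<Rightarrow> 'g set) \<Rightarrow> 'x measure \<Rightarrow> ereal" where
  "upper_mdim_M X act Fs \<mu> = (SUP m \<in> MG X act \<mu>.
      Limsup (at_right 0) (\<lambda>\<epsilon>. ereal (F_eps X act Fs (m \<epsilon>) \<epsilon> / ln (1 / \<epsilon>))))"

definition lower_mdim_M :: "'x::metric_space set \<Rightarrow> ('g \<Rightarrow> 'x \<Rightarrow> 'x) \<Rightarrow> (nat \<Rightarrow> 'g set) \<Rightarrow> 'x measure \<Rightarrow> ereal" where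
  "lower_mdim_M X act Fs \<mu> = (SUP m \<in> MG X act \<mu>.
      Liminf (at_right 0) (\<lambda>\<epsilon>. ereal (F_eps X act Fs (m \<epsilon>) \<epsilon> / ln (1 / \<epsilon>))))"

definition usc_on :: "'a topology \<Rightarrow> ('a \<Rightarrow> ereal) \<Rightarrow> bool" where
  "usc_on T f \<longleftrightarrow> (\<forall>t. openin T {x \<in> topspace T. f x < t})"

end

theory Submission
  imports Defs
begin

(* Both metric mean dimensions of \<mu> are suprema, over families (\<mu>_\<epsilon>) of finite ergodic combinations
   converging to \<mu> as \<epsilon> \<rightarrow> 0+, of a functional (limsup resp. liminf of F(\<mu>_\<epsilon>, \<epsilon>) / log(1/\<epsilon>))
   of the family alone. Such a supremum is upper semicontinuous by a diagonal argument: if points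
   \<mu>_k \<rightarrow> \<mu> carry families with values > c, splice these families along intervals of \<epsilon> shrinking
   to 0 into a single family that converges to \<mu> and still has value \<ge> c. Convergence of the spliced
   family only needs a countable decreasing neighbourhood base at \<mu>, i.e. first countability of
   the weak* topology, which holds because C(X) is separable for compact metric X. *)

section \<open>Separability of C(X)\<close>

lemma compact_imp_dense_sequence:
  fixes X :: "'a::metric_space set"
  assumes "compact X"
  obtains c :: "nat \<Rightarrow> 'a" where "\<And>x r. x \<in> X \<Longrightarrow> r > 0 \<Longrightarrow> \<exists>n. dist x (c n) < r"
proof -
  have "\<forall>n::nat. \<exists>K. finite K \<and> K \<subseteq> X \<and> X \<subseteq> (\<Union>y\<in>K. ball y (1 / Suc n))"
    using seq_compact_imp_totally_bounded[OF compact_imp_seq_compact[OF assms]] by simp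
  then obtain K where K: "\<And>n. finite (K n)" "\<And>n. X \<subseteq> (\<Union>y\<in>K n. ball y (1 / Suc n))"
    by metis
  have "countable (\<Union>n. K n)"
    using K(1) by (simp add: countable_finite)
  then have "\<exists>n. dist x (from_nat_into (\<Union>n. K n) n) < r" if "x \<in> X" "r > 0" for x r
  proof -
    obtain n :: nat where n: "1 / Suc n < r"
      using reals_Archimedean[OF \<open>r > 0\<close>] by (auto simp: inverse_eq_divide)
    obtain y where "y \<in> K n" "dist x y < 1 / Suc n"
      using K(2)[of n] \<open>x \<in> X\<close> by (auto simp: dist_commute)
    with n \<open>countable _\<close> show ?thesis
      by (metis UN_I UNIV_I from_nat_into_surj order.strict_trans)
  qed
  then show ?thesis
    using that by blast
qed

lemma compact_continuous_bound:
  fixes f :: "'a::metric_space \<Rightarrow> real"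
  assumes "compact X" "continuous_on X f"
  obtains B where "B > 0" "\<And>x. x \<in> X \<Longrightarrow> \<bar>f x\<bar> \<le> B"
  using compact_imp_bounded[OF compact_continuous_image[OF assms(2,1)]] that
  by (auto simp: bounded_pos)

datatype 'r dist_poly =
  PConst 'r | PDist nat | PAdd "'r dist_poly" "'r dist_poly" | PMult "'r dist_poly" "'r dist_poly"

instance dist_poly :: (countable) countable
  by countable_datatype

primrec eval_dist_poly :: "('r \<Rightarrow> real) \<Rightarrow> (nat \<Rightarrow> 'a::metric_space) \<Rightarrow> 'r dist_poly \<Rightarrow> 'a \<Rightarrow> real" where
  "eval_dist_poly h c (PConst r) x = h r"
| "eval_dist_poly h c (PDist n) x = dist x (c n)"
| "eval_dist_poly h c (PAdd p q) x = eval_dist_poly h c p x + eval_dist_poly h c q x"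
| "eval_dist_poly h c (PMult p q) x = eval_dist_poly h c p x * eval_dist_poly h c q x"

lemma continuous_on_eval_dist_poly: "continuous_on X (eval_dist_poly h c p)"
  by (induction p) (auto intro!: continuous_intros)

lemma abs_mult_diff_le:
  fixes a b a' b' A B d :: real
  assumes "\<bar>a\<bar> \<le> A" "\<bar>b\<bar> \<le> B" "\<bar>a - a'\<bar> < d" "\<bar>b - b'\<bar> < d" "d \<le> 1"
  shows "\<bar>a * b - a' * b'\<bar> \<le> (A + B + 1) * d"
proof -
  have "\<bar>b'\<bar> \<le> B + 1"
    using assms by linarith
  then have "\<bar>a\<bar> * \<bar>b - b'\<bar> + \<bar>b'\<bar> * \<bar>a - a'\<bar> \<le> A * d + (B + 1) * d"
    using assms by (intro add_mono mult_mono) auto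
  moreover have "a * b - a' * b' = a * (b - b') + b' * (a - a')"
    by (simp add: algebra_simps)
  then have "\<bar>a * b - a' * b'\<bar> \<le> \<bar>a\<bar> * \<bar>b - b'\<bar> + \<bar>b'\<bar> * \<bar>a - a'\<bar>"
    by (metis abs_mult abs_triangle_ineq)
  ultimately show ?thesis
    by (simp add: algebra_simps)
qed

lemma eval_dist_poly_rat_approx:
  fixes X :: "'a::metric_space set"
  assumes "compact X" "e > 0"
  shows "\<exists>q::rat dist_poly. \<forall>x\<in>X. \<bar>eval_dist_poly (\<lambda>r. r) c p x - eval_dist_poly of_rat c q x\<bar> < e"
  using assms(2)
proof (induction p arbitrary: e)
  case (PConst r)
  obtain q where "q \<in> \<rat>" "r - e < q" "q < r"
    using Rats_dense_in_real[of "r - e" r] PConst by auto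
  moreover from \<open>q \<in> \<rat>\<close> obtain q' where "q = of_rat q'"
    by (elim Rats_cases)
  ultimately show ?case
    by (intro exI[of _ "PConst q'"]) auto
next
  case (PDist n)
  then show ?case
    by (intro exI[of _ "PDist n"]) auto
next
  case (PAdd p1 p2)
  obtain q1 q2 where "\<forall>x\<in>X. \<bar>eval_dist_poly (\<lambda>r. r) c p1 x - eval_dist_poly of_rat c q1 x\<bar> < e/2"
    "\<forall>x\<in>X. \<bar>eval_dist_poly (\<lambda>r. r) c p2 x - eval_dist_poly of_rat c q2 x\<bar> < e/2"
    using PAdd half_gt_zero by meson
  then show ?case
    by (intro exI[of _ "PAdd q1 q2"] ballI) (simp, smt (verit) bspec)
next
  case (PMult p1 p2)
  obtain A B where A: "A > 0" "\<And>x. x \<in> X \<Longrightarrow> \<bar>eval_dist_poly (\<lambda>r. r) c p1 x\<bar> \<le> A"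
    and B: "B > 0" "\<And>x. x \<in> X \<Longrightarrow> \<bar>eval_dist_poly (\<lambda>r. r) c p2 x\<bar> \<le> B"
    using compact_continuous_bound[OF assms(1) continuous_on_eval_dist_poly] by metis
  define d where "d = min 1 (e / (2 * (A + B + 1)))"
  have d: "d > 0" "d \<le> 1"
    using A B PMult.prems by (auto simp: d_def)
  have "(A + B + 1) * d \<le> (A + B + 1) * (e / (2 * (A + B + 1)))"
    using A B by (intro mult_left_mono) (auto simp: d_def)
  also have "\<dots> = e / 2"
    using A B by (simp add: field_simps)
  finally have "(A + B + 1) * d < e"
    using PMult.prems by simp
  obtain q1 q2 where "\<forall>x\<in>X. \<bar>eval_dist_poly (\<lambda>r. r) c p1 x - eval_dist_poly of_rat c q1 x\<bar> < d"
    "\<forall>x\<in>X. \<bar>eval_dist_poly (\<lambda>r. r) c p2 x - eval_dist_poly of_rat c q2 x\<bar> < d"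
    using PMult d(1) by meson
  then have "\<forall>x\<in>X. \<bar>eval_dist_poly (\<lambda>r. r) c (PMult p1 p2) x - eval_dist_poly of_rat c (PMult q1 q2) x\<bar> \<le> (A + B + 1) * d"
    using A B d by (auto intro!: abs_mult_diff_le)
  then show ?case
    using \<open>(A + B + 1) * d < e\<close> by (intro exI[of _ "PMult q1 q2"]) fastforce
qed

text \<open>Polynomials in the distances to a dense sequence form a point-separating algebra
  (Stone--Weierstrass), and rational coefficients suffice.\<close>

lemma compact_imp_countable_uniformly_dense:
  fixes X :: "'a::metric_space set"
  assumes "compact X"
  obtains d :: "nat \<Rightarrow> 'a \<Rightarrow> real"
  where "\<And>j. continuous_on X (d j)"
    and "\<And>f e. continuous_on X f \<Longrightarrow> e > 0 \<Longrightarrow> \<exists>j. \<forall>x\<in>X. \<bar>f x - d j x\<bar> < e"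
proof -
  obtain c :: "nat \<Rightarrow> 'a" where c: "\<And>x r. x \<in> X \<Longrightarrow> r > 0 \<Longrightarrow> \<exists>n. dist x (c n) < r"
    using compact_imp_dense_sequence[OF assms] by blast
  define E where "E = eval_dist_poly (\<lambda>r::real. r) c"
  interpret function_ring_on "range E" X
  proof
    show "(\<lambda>x. f x + g x) \<in> range E" "(\<lambda>x. f x * g x) \<in> range E"
      if fg: "f \<in> range E" "g \<in> range E" for f g
    proof -
      obtain p q where "f = E p" "g = E q"
        using fg by blast
      then have "(\<lambda>x. f x + g x) = E (PAdd p q)" "(\<lambda>x. f x * g x) = E (PMult p q)"
        by (auto simp: E_def)
      then show "(\<lambda>x. f x + g x) \<in> range E" "(\<lambda>x. f x * g x) \<in> range E"
        by (metis rangeI)+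
    qed
    show "(\<lambda>_. r) \<in> range E" for r
      by (auto simp: E_def intro!: range_eqI[of _ _ "PConst r"])
    show "\<exists>f\<in>range E. f x \<noteq> f y" if xy: "x \<in> X" "y \<in> X" "x \<noteq> y" for x y
    proof -
      have "dist x y / 2 > 0"
        using xy by simp
      then obtain n where n: "dist x (c n) < dist x y / 2"
        using c xy(1) by blast
      then have "dist x (c n) \<noteq> dist y (c n)"
        using dist_triangle[of x y "c n"] by (simp add: dist_commute)
      then show ?thesis
        by (intro bexI[of _ "E (PDist n)"]) (auto simp: E_def)
    qed
  qed (auto simp: E_def assms continuous_on_eval_dist_poly)
  show ?thesis
  proof (rule that[of "\<lambda>j. eval_dist_poly of_rat c (from_nat j)"])
    show "continuous_on X (eval_dist_poly of_rat c (from_nat j))" for j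
      by (rule continuous_on_eval_dist_poly)
    fix f :: "'a \<Rightarrow> real" and e :: real
    assume "continuous_on X f" "e > 0"
    then obtain p where p: "\<forall>x\<in>X. \<bar>f x - eval_dist_poly (\<lambda>r. r) c p x\<bar> < e / 2"
      using Stone_Weierstrass_basic[of f "e / 2"] by (auto simp: E_def)
    obtain q :: "rat dist_poly" where q: "\<forall>x\<in>X. \<bar>eval_dist_poly (\<lambda>r. r) c p x - eval_dist_poly of_rat c q x\<bar> < e / 2"
      using eval_dist_poly_rat_approx[OF assms half_gt_zero[OF \<open>e > 0\<close>]] by blast
    have "\<forall>x\<in>X. \<bar>f x - eval_dist_poly of_rat c (from_nat (to_nat q)) x\<bar> < e"
      using p q by (simp, smt (verit) bspec)
    then show "\<exists>j. \<forall>x\<in>X. \<bar>f x - eval_dist_poly of_rat c (from_nat j) x\<bar> < e"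
      by blast
  qed
qed

section \<open>First countability of the weak* topology\<close>

lemma integrable_PM_continuous:
  assumes "M \<in> PM X" "compact X" "continuous_on X (f :: 'a::metric_space \<Rightarrow> real)"
  shows "integrable M f"
proof -
  have sets: "sets M = sets (restrict_space borel X)" and space: "space M = X"
    using assms(1) by (auto simp: PM_def)
  interpret prob_space M
    using assms(1) by (simp add: PM_def)
  have "f \<in> borel_measurable M"
    unfolding measurable_cong_sets[OF sets refl] by (rule borel_measurable_continuous_on_restrict[OF assms(3)])
  moreover obtain B where "\<And>x. x \<in> X \<Longrightarrow> \<bar>f x\<bar> \<le> B"
    using compact_continuous_bound[OF assms(2,3)] by metis
  ultimately show ?thesis
    using space by (intro integrable_const_bound[where B = B] AE_I2) auto
qed

lemma PM_integral_diff_le: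
  assumes "M \<in> PM X" "compact X" "continuous_on X (f :: 'a::metric_space \<Rightarrow> real)" "continuous_on X g"
    and "\<And>x. x \<in> X \<Longrightarrow> \<bar>f x - g x\<bar> \<le> e"
  shows "\<bar>(\<integral>x. f x \<partial>M) - (\<integral>x. g x \<partial>M)\<bar> \<le> e"
proof -
  interpret prob_space M
    using assms(1) by (simp add: PM_def)
  have int: "integrable M f" "integrable M g"
    using integrable_PM_continuous assms(1-4) by blast+
  have "\<bar>(\<integral>x. f x \<partial>M) - (\<integral>x. g x \<partial>M)\<bar> = \<bar>\<integral>x. f x - g x \<partial>M\<bar>"
    using int by simp
  also have "\<dots> \<le> (\<integral>x. \<bar>f x - g x\<bar> \<partial>M)"
    by (rule integral_abs_bound)
  also have "\<dots> \<le> (\<integral>x. e \<partial>M)"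
    using int assms(1,5) by (intro integral_mono) (auto simp: PM_def)
  finally show ?thesis
    by (simp add: prob_space)
qed

lemma topspace_weak_star [simp]: "topspace (weak_star X) = PM X"
  unfolding weak_star_def topology_generated_by_topspace
  by (rule subset_antisym, blast) (intro Union_upper CollectI exI[of _ "\<lambda>_. 0"] exI[of _ UNIV], auto)

lemma openin_weak_star_integral:
  assumes "continuous_on X f" "open (U :: real set)"
  shows "openin (weak_star X) {M \<in> PM X. (\<integral>x. f x \<partial>M) \<in> U}"
  unfolding weak_star_def openin_topology_generated_by_iff
  using assms by (intro generate_topology_on.Basis) blast

definition weak_star_nbhd ::
    "'a::metric_space set \<Rightarrow> (nat \<Rightarrow> 'a \<Rightarrow> real) \<Rightarrow> 'a measure \<Rightarrow> nat \<Rightarrow> 'a measure set"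
  where "weak_star_nbhd X d \<mu>0 k =
    {M \<in> PM X. \<forall>j<k. dist (\<integral>x. d j x \<partial>M) (\<integral>x. d j x \<partial>\<mu>0) < 1 / Suc k}"

lemma openin_weak_star_nbhd:
  assumes "\<And>j. continuous_on X (d j)"
  shows "openin (weak_star X) (weak_star_nbhd X d \<mu>0 k)"
proof -
  let ?S = "\<lambda>j. {M \<in> PM X. (\<integral>x. d j x \<partial>M) \<in> ball (\<integral>x. d j x \<partial>\<mu>0) (1 / Suc k)}"
  have "openin (weak_star X) (?S j)" for j
    by (rule openin_weak_star_integral[OF assms]) simp
  then have "openin (weak_star X) (topspace (weak_star X) \<inter> \<Inter> (?S ` {..<k}))"
    by (intro openin_Int_Inter openin_topspace) auto
  moreover have "topspace (weak_star X) \<inter> \<Inter> (?S ` {..<k}) = weak_star_nbhd X d \<mu>0 k"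
    by (auto simp: weak_star_nbhd_def dist_commute)
  ultimately show ?thesis
    by simp
qed

lemma decseq_weak_star_nbhd: "decseq (weak_star_nbhd X d \<mu>0)"
proof (rule antimonoI)
  fix k l :: nat assume "k \<le> l"
  then have "1 / Suc l \<le> 1 / Suc k" "\<And>j. j < k \<Longrightarrow> j < l"
    by (simp_all add: frac_le)
  then show "weak_star_nbhd X d \<mu>0 l \<subseteq> weak_star_nbhd X d \<mu>0 k"
    unfolding weak_star_nbhd_def by (auto intro: less_le_trans)
qed

lemma weak_star_nbhd_subset_subbasic:
  fixes X :: "'a::metric_space set" and d :: "nat \<Rightarrow> 'a \<Rightarrow> real" and f :: "'a \<Rightarrow> real"
  assumes X: "compact X" and \<mu>0: "\<mu>0 \<in> PM X"
    and d: "\<And>j. continuous_on X (d j)"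
      "\<And>f e. continuous_on X f \<Longrightarrow> e > 0 \<Longrightarrow> \<exists>j. \<forall>x\<in>X. \<bar>f x - d j x\<bar> < e"
    and f: "continuous_on X f" and U: "open U" "(\<integral>x. f x \<partial>\<mu>0) \<in> U"
  shows "\<exists>k. weak_star_nbhd X d \<mu>0 k \<subseteq> {M \<in> PM X. (\<integral>x. f x \<partial>M) \<in> U}"
proof -
  obtain e where e: "e > 0" "ball (\<integral>x. f x \<partial>\<mu>0) e \<subseteq> U"
    using U open_contains_ball by blast
  obtain j where j: "\<And>x. x \<in> X \<Longrightarrow> \<bar>f x - d j x\<bar> \<le> e / 3"
    using d(2)[OF f, of "e / 3"] e(1) by (auto intro: less_imp_le)
  obtain N :: nat where N: "1 / Suc N < e / 3"
    using reals_Archimedean[of "e / 3"] e(1) by (auto simp: inverse_eq_divide)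
  have "(\<integral>x. f x \<partial>M) \<in> U" if M: "M \<in> weak_star_nbhd X d \<mu>0 (N + Suc j)" for M
  proof -
    have "1 / Suc (N + Suc j) \<le> 1 / Suc N"
      by (simp add: frac_le)
    moreover have "dist (\<integral>x. d j x \<partial>M) (\<integral>x. d j x \<partial>\<mu>0) < 1 / Suc (N + Suc j)"
      using M by (simp add: weak_star_nbhd_def)
    ultimately have "dist (\<integral>x. d j x \<partial>M) (\<integral>x. d j x \<partial>\<mu>0) < e / 3"
      using N by linarith
    moreover have "\<bar>(\<integral>x. f x \<partial>M) - (\<integral>x. d j x \<partial>M)\<bar> \<le> e / 3"
      "\<bar>(\<integral>x. f x \<partial>\<mu>0) - (\<integral>x. d j x \<partial>\<mu>0)\<bar> \<le> e / 3"
      using PM_integral_diff_le[OF _ X f d(1) j] M \<mu>0 by (auto simp: weak_star_nbhd_def)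
    ultimately have "dist (\<integral>x. f x \<partial>\<mu>0) (\<integral>x. f x \<partial>M) < e"
      unfolding dist_real_def by arith
    then show ?thesis
      using e(2) by auto
  qed
  moreover have "weak_star_nbhd X d \<mu>0 (N + Suc j) \<subseteq> PM X"
    by (auto simp: weak_star_nbhd_def)
  ultimately show ?thesis
    by blast
qed

lemma weak_star_nbhd_subset_open:
  fixes X :: "'a::metric_space set" and d :: "nat \<Rightarrow> 'a \<Rightarrow> real"
  assumes X: "compact X" and \<mu>0: "\<mu>0 \<in> PM X"
    and d: "\<And>j. continuous_on X (d j)"
      "\<And>f e. continuous_on X f \<Longrightarrow> e > 0 \<Longrightarrow> \<exists>j. \<forall>x\<in>X. \<bar>f x - d j x\<bar> < e"
    and V: "openin (weak_star X) V" "\<mu>0 \<in> V"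
  shows "\<exists>k. weak_star_nbhd X d \<mu>0 k \<subseteq> V"
proof -
  have subbasic: "\<exists>k. weak_star_nbhd X d \<mu>0 k \<subseteq> {M \<in> PM X. (\<integral>x. f x \<partial>M) \<in> U}"
    if "continuous_on X f" "open U" "(\<integral>x. f x \<partial>\<mu>0) \<in> U" for f :: "'a \<Rightarrow> real" and U :: "real set"
    using weak_star_nbhd_subset_subbasic[OF X \<mu>0 d that] .
  have "generate_topology_on
      {{M \<in> PM X. (\<integral>x. f x \<partial>M) \<in> U} | f U. continuous_on X f \<and> open (U :: real set)} V"
    using V(1) unfolding weak_star_def openin_topology_generated_by_iff .
  then show ?thesis
    using V(2)
  proof (induction rule: generate_topology_on.induct)
    case (Int A B)
    then obtain k l where "weak_star_nbhd X d \<mu>0 k \<subseteq> A" "weak_star_nbhd X d \<mu>0 l \<subseteq> B"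
      by auto
    moreover have "weak_star_nbhd X d \<mu>0 (max k l) \<subseteq> weak_star_nbhd X d \<mu>0 k \<inter> weak_star_nbhd X d \<mu>0 l"
      using decseqD[OF decseq_weak_star_nbhd[of X d \<mu>0], of k "max k l"]
        decseqD[OF decseq_weak_star_nbhd[of X d \<mu>0], of l "max k l"] by simp
    ultimately show ?case
      by blast
  next
    case (Basis s)
    then obtain f :: "'a \<Rightarrow> real" and U :: "real set"
      where s: "s = {M \<in> PM X. (\<integral>x. f x \<partial>M) \<in> U}" "continuous_on X f" "open U"
      by blast
    with Basis.prems have "(\<integral>x. f x \<partial>\<mu>0) \<in> U"
      by simp
    with s show ?case
      using subbasic by simp
  qed blast+
qed

lemma first_countable_weak_star:
  fixes X :: "'a::metric_space set"
  assumes X: "compact X"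
  shows "first_countable (weak_star X)"
  unfolding first_countable_def topspace_weak_star
proof
  fix \<mu>0 assume \<mu>0: "\<mu>0 \<in> PM X"
  obtain d :: "nat \<Rightarrow> 'a \<Rightarrow> real" where d: "\<And>j. continuous_on X (d j)"
    "\<And>f e. continuous_on X f \<Longrightarrow> e > 0 \<Longrightarrow> \<exists>j. \<forall>x\<in>X. \<bar>f x - d j x\<bar> < e"
    using compact_imp_countable_uniformly_dense[OF X] by metis
  have "openin (weak_star X) (weak_star_nbhd X d \<mu>0 k)" for k
    using d(1) by (rule openin_weak_star_nbhd)
  moreover have "\<exists>k. weak_star_nbhd X d \<mu>0 k \<subseteq> U" if "openin (weak_star X) U" "\<mu>0 \<in> U" for U
    using X \<mu>0 d that by (rule weak_star_nbhd_subset_open)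
  moreover have "\<mu>0 \<in> weak_star_nbhd X d \<mu>0 k" for k
    using \<mu>0 by (simp add: weak_star_nbhd_def)
  ultimately show "\<exists>\<B>. countable \<B> \<and> (\<forall>V\<in>\<B>. openin (weak_star X) V) \<and>
      (\<forall>U. openin (weak_star X) U \<and> \<mu>0 \<in> U \<longrightarrow> (\<exists>V\<in>\<B>. \<mu>0 \<in> V \<and> V \<subseteq> U))"
    by (intro exI[of _ "range (weak_star_nbhd X d \<mu>0)"]) auto
qed

section \<open>Diagonal families at 0+\<close>

lemma decreasing_null_ex1_interval:
  fixes b :: "nat \<Rightarrow> real"
  assumes dec: "\<And>k. b (Suc k) < b k" and lim: "b \<longlonglongrightarrow> 0" and \<epsilon>: "0 < \<epsilon>" "\<epsilon> \<le> b 0"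
  shows "\<exists>!k. b (Suc k) < \<epsilon> \<and> \<epsilon> \<le> b k"
proof -
  have "decseq b"
    using dec by (intro decseq_SucI less_imp_le)
  obtain N where "\<forall>n\<ge>N. b n < \<epsilon>"
    using order_tendstoD(2)[OF lim \<epsilon>(1)] by (auto simp: eventually_sequentially)
  then have "b (Suc N) < \<epsilon>"
    by simp
  then have ex: "\<exists>k. b (Suc k) < \<epsilon>"
    by blast
  define k where "k = (LEAST k. b (Suc k) < \<epsilon>)"
  have "b (Suc k) < \<epsilon>"
    unfolding k_def using ex by (rule LeastI_ex)
  moreover have "\<epsilon> \<le> b k"
  proof (cases k)
    case (Suc j)
    then have "\<not> b (Suc j) < \<epsilon>"
      unfolding k_def by (metis lessI not_less_Least)
    then show ?thesis
      using Suc by simp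
  qed (use \<epsilon> in simp)
  moreover have "\<not> k < l" if "b (Suc k) < \<epsilon>" "\<epsilon> \<le> b l" for k l
    using that decseqD[OF \<open>decseq b\<close>, of "Suc k" l] by (auto simp: Suc_le_eq)
  ultimately show ?thesis
    by (intro ex_ex1I) (blast, meson linorder_neqE_nat)
qed

lemma decreasing_null_interval_index:
  fixes b :: "nat \<Rightarrow> real"
  assumes dec: "\<And>k. b (Suc k) < b k" and lim: "b \<longlonglongrightarrow> 0" and pos: "\<And>k. 0 < b k"
  obtains idx :: "real \<Rightarrow> nat"
  where "\<And>\<epsilon> k. 0 < \<epsilon> \<Longrightarrow> \<epsilon> < b k \<Longrightarrow> k \<le> idx \<epsilon> \<and> \<epsilon> \<le> b (idx \<epsilon>)"
    and "\<And>\<epsilon> k. b (Suc k) < \<epsilon> \<Longrightarrow> \<epsilon> \<le> b k \<Longrightarrow> idx \<epsilon> = k"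
proof -
  have "decseq b"
    using dec by (intro decseq_SucI less_imp_le)
  define idx where "idx \<epsilon> = (THE k. b (Suc k) < \<epsilon> \<and> \<epsilon> \<le> b k)" for \<epsilon>
  have idx: "b (Suc (idx \<epsilon>)) < \<epsilon> \<and> \<epsilon> \<le> b (idx \<epsilon>)" if "0 < \<epsilon>" "\<epsilon> \<le> b 0" for \<epsilon>
    unfolding idx_def by (rule theI'[OF decreasing_null_ex1_interval[OF dec lim that]])
  show ?thesis
  proof (rule that)
    fix \<epsilon> k assume \<epsilon>: "0 < \<epsilon>" "\<epsilon> < b k"
    then have i: "b (Suc (idx \<epsilon>)) < \<epsilon>" "\<epsilon> \<le> b (idx \<epsilon>)"
      using idx decseqD[OF \<open>decseq b\<close>, of 0 k] by auto
    moreover have "k \<le> idx \<epsilon>"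
      using i(1) \<epsilon>(2) decseqD[OF \<open>decseq b\<close>, of "Suc (idx \<epsilon>)" k] by (cases "k \<le> idx \<epsilon>") auto
    ultimately show "k \<le> idx \<epsilon> \<and> \<epsilon> \<le> b (idx \<epsilon>)"
      by simp
  next
    fix \<epsilon> k assume \<epsilon>: "b (Suc k) < \<epsilon>" "\<epsilon> \<le> b k"
    moreover have "0 < \<epsilon>" "\<epsilon> \<le> b 0"
      using \<epsilon> pos[of "Suc k"] decseqD[OF \<open>decseq b\<close>, of 0 k] by auto
    ultimately show "idx \<epsilon> = k"
      unfolding idx_def by (intro the1_equality decreasing_null_ex1_interval[OF dec lim]) auto
  qed
qed

lemma at_right_nested_witnesses:
  fixes \<eta> :: "nat \<Rightarrow> real" and R :: "nat \<Rightarrow> real \<Rightarrow> bool"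
  assumes \<eta>: "\<And>k. \<eta> k > 0" and R: "\<And>k. frequently (R k) (at_right 0)"
  obtains b w where "\<And>k. 0 < b k" "\<And>k. b k < \<eta> k" "b \<longlonglongrightarrow> 0"
    "\<And>k. b (Suc k) < w k" "\<And>k. w k < b k" "\<And>k. R k (w k)"
proof -
  have R_below: "\<exists>w. 0 < w \<and> w < x \<and> R k w" if "x > 0" for k x
    using R[of k] that unfolding frequently_def eventually_at_right_field by force
  define I where "I k x \<longleftrightarrow> 0 < x \<and> x < \<eta> k \<and> x < inverse (real (Suc k))" for k x
  have "\<exists>b. \<forall>k. I k (b k) \<and> (\<exists>w. b (Suc k) < w \<and> w < b k \<and> R k w)"
  proof (rule dependent_nat_choice)
    show "\<exists>x. I 0 x"
      using \<eta>[of 0] by (auto simp: I_def intro!: exI[of _ "min (\<eta> 0) 1 / 2"])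
    fix x k assume "I k x"
    then obtain w where w: "0 < w" "w < x" "R k w"
      using R_below by (auto simp: I_def)
    define y where "y = min w (min (\<eta> (Suc k)) (inverse (real (Suc (Suc k))))) / 2"
    have "I (Suc k) y" "y < w"
      using w \<eta>[of "Suc k"] by (auto simp: I_def y_def min_def)
    with w show "\<exists>y. I (Suc k) y \<and> (\<exists>w. y < w \<and> w < x \<and> R k w)"
      by blast
  qed
  then obtain b w where b: "\<And>k. I k (b k)" and w: "\<And>k. b (Suc k) < w k" "\<And>k. w k < b k" "\<And>k. R k (w k)"
    by metis
  have "b \<longlonglongrightarrow> 0"
    using b by (intro tendsto_sandwich[OF _ _ tendsto_const LIMSEQ_inverse_real_of_nat])
      (auto simp: I_def less_imp_le)
  with b w show ?thesis
    by (intro that[of b w]) (auto simp: I_def)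
qed

text \<open>The index is k on the interval (b (Suc k), b k] of a null sequence b, where b k is chosen
  inside the range where P k holds and each interval contains a witness of R k.\<close>

lemma at_right_diagonal_index:
  fixes P R :: "nat \<Rightarrow> real \<Rightarrow> bool"
  assumes P: "\<And>k. eventually (P k) (at_right 0)" and R: "\<And>k. frequently (R k) (at_right 0)"
  obtains idx :: "real \<Rightarrow> nat"
  where "\<And>k. eventually (\<lambda>\<epsilon>. k \<le> idx \<epsilon> \<and> P (idx \<epsilon>) \<epsilon>) (at_right 0)"
    and "frequently (\<lambda>\<epsilon>. R (idx \<epsilon>) \<epsilon>) (at_right 0)"
proof -
  obtain \<eta> where \<eta>: "\<And>k. \<eta> k > 0" "\<And>k \<epsilon>. 0 < \<epsilon> \<Longrightarrow> \<epsilon> < \<eta> k \<Longrightarrow> P k \<epsilon>"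
    using P unfolding eventually_at_right_field by metis
  obtain b w where b: "\<And>k. 0 < b k" "\<And>k. b k < \<eta> k" "b \<longlonglongrightarrow> 0"
    and w: "\<And>k. b (Suc k) < w k" "\<And>k. w k < b k" "\<And>k. R k (w k)"
    using at_right_nested_witnesses[of \<eta> R, OF \<eta>(1) R] by blast
  have dec: "b (Suc k) < b k" for k
    using w(1,2) less_trans by blast
  obtain idx where idx: "\<And>\<epsilon> k. 0 < \<epsilon> \<Longrightarrow> \<epsilon> < b k \<Longrightarrow> k \<le> idx \<epsilon> \<and> \<epsilon> \<le> b (idx \<epsilon>)"
    and idx_eq: "\<And>\<epsilon> k. b (Suc k) < \<epsilon> \<Longrightarrow> \<epsilon> \<le> b k \<Longrightarrow> idx \<epsilon> = k"
    using decreasing_null_interval_index[OF dec b(3,1)] by metis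
  show ?thesis
  proof (rule that)
    fix k
    show "eventually (\<lambda>\<epsilon>. k \<le> idx \<epsilon> \<and> P (idx \<epsilon>) \<epsilon>) (at_right 0)"
      unfolding eventually_at_right_field
    proof (intro exI[of _ "b k"] conjI allI impI b(1))
      fix \<epsilon> :: real assume \<epsilon>: "0 < \<epsilon>" "\<epsilon> < b k"
      then show "k \<le> idx \<epsilon>"
        using idx by blast
      have "\<epsilon> \<le> b (idx \<epsilon>)"
        using idx \<epsilon> by blast
      then show "P (idx \<epsilon>) \<epsilon>"
        using b(2) \<epsilon>(1) by (intro \<eta>(2)) (auto intro: le_less_trans)
    qed
  next
    show "frequently (\<lambda>\<epsilon>. R (idx \<epsilon>) \<epsilon>) (at_right 0)"
      unfolding frequently_def eventually_at_right_field
    proof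
      assume "\<exists>\<delta>>0. \<forall>\<epsilon>>0. \<epsilon> < \<delta> \<longrightarrow> \<not> R (idx \<epsilon>) \<epsilon>"
      then obtain \<delta> :: real where "\<delta> > 0" and \<delta>: "\<And>\<epsilon>. 0 < \<epsilon> \<Longrightarrow> \<epsilon> < \<delta> \<Longrightarrow> \<not> R (idx \<epsilon>) \<epsilon>"
        by blast
      obtain k where "b k < \<delta>"
        using order_tendstoD(2)[OF b(3) \<open>\<delta> > 0\<close>] by (auto simp: eventually_sequentially)
      moreover have "idx (w k) = k"
        using w(1,2) by (intro idx_eq less_imp_le)
      ultimately show False
        using \<delta>[of "w k"] w(1,2)[of k] w(3) b(1)[of "Suc k"] by auto
    qed
  qed
qed

text \<open>The property of limsup and liminf along 0+ that makes suprema over converging families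
  upper semicontinuous (see usc_on_SUP_converging_families).\<close>

definition diagonal_closed :: "((real \<Rightarrow> 'a) \<Rightarrow> 'b::order) \<Rightarrow> bool" where
  "diagonal_closed \<Phi> \<longleftrightarrow>
     (\<forall>(ms :: nat \<Rightarrow> real \<Rightarrow> 'a) (P :: nat \<Rightarrow> real \<Rightarrow> bool) c.
        (\<forall>k. c < \<Phi> (ms k) \<and> eventually (P k) (at_right 0)) \<longrightarrow>
        (\<exists>idx :: real \<Rightarrow> nat.
           (\<forall>k. eventually (\<lambda>\<epsilon>. k \<le> idx \<epsilon> \<and> P (idx \<epsilon>) \<epsilon>) (at_right 0)) \<and>
               c \<le> \<Phi> (\<lambda>\<epsilon>. ms (idx \<epsilon>) \<epsilon>)))"

lemma diagonal_closedD:
  assumes "diagonal_closed \<Phi>" "\<And>k. c < \<Phi> (ms k)" "\<And>k. eventually (P k) (at_right 0)"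
  obtains idx :: "real \<Rightarrow> nat"
  where "\<And>k. eventually (\<lambda>\<epsilon>. k \<le> idx \<epsilon> \<and> P (idx \<epsilon>) \<epsilon>) (at_right 0)" "c \<le> \<Phi> (\<lambda>\<epsilon>. ms (idx \<epsilon>) \<epsilon>)"
  using assms unfolding diagonal_closed_def by blast

lemma diagonal_closed_Limsup:
  fixes G :: "'a \<Rightarrow> real \<Rightarrow> 'b::complete_linorder"
  shows "diagonal_closed (\<lambda>m. Limsup (at_right 0) (\<lambda>\<epsilon>. G (m \<epsilon>) \<epsilon>))"
  unfolding diagonal_closed_def
proof (intro allI impI)
  fix ms :: "nat \<Rightarrow> real \<Rightarrow> 'a" and P :: "nat \<Rightarrow> real \<Rightarrow> bool" and c :: 'b
  assume ms: "\<forall>k. c < Limsup (at_right 0) (\<lambda>\<epsilon>. G (ms k \<epsilon>) \<epsilon>) \<and> eventually (P k) (at_right 0)"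
  have freq_k: "frequently (\<lambda>\<epsilon>. c < G (ms k \<epsilon>) \<epsilon>) (at_right 0)" for k
  proof (rule ccontr)
    assume "\<not> ?thesis"
    then have "Limsup (at_right 0) (\<lambda>\<epsilon>. G (ms k \<epsilon>) \<epsilon>) \<le> c"
      by (intro Limsup_bounded) (simp add: not_frequently not_less)
    with ms show False
      by (meson leD)
  qed
  obtain idx where idx: "\<And>k. eventually (\<lambda>\<epsilon>. k \<le> idx \<epsilon> \<and> P (idx \<epsilon>) \<epsilon>) (at_right 0)"
    and freq: "frequently (\<lambda>\<epsilon>. c < G (ms (idx \<epsilon>) \<epsilon>) \<epsilon>) (at_right 0)"
    by (rule at_right_diagonal_index[of P "\<lambda>k \<epsilon>. c < G (ms k \<epsilon>) \<epsilon>"]) (use ms freq_k in auto)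
  have "c \<le> Limsup (at_right 0) (\<lambda>\<epsilon>. G (ms (idx \<epsilon>) \<epsilon>) \<epsilon>)"
  proof (rule ccontr)
    assume "\<not> ?thesis"
    then have "eventually (\<lambda>\<epsilon>. G (ms (idx \<epsilon>) \<epsilon>) \<epsilon> < c) (at_right 0)"
      by (intro Limsup_lessD) (simp add: not_le)
    with freq have "frequently (\<lambda>_. False) (at_right (0::real))"
      by (rule frequently_rev_mp[OF _ eventually_mono]) auto
    then show False
      by simp
  qed
  with idx show "\<exists>idx. (\<forall>k. eventually (\<lambda>\<epsilon>. k \<le> idx \<epsilon> \<and> P (idx \<epsilon>) \<epsilon>) (at_right 0)) \<and>
      c \<le> Limsup (at_right 0) (\<lambda>\<epsilon>. G (ms (idx \<epsilon>) \<epsilon>) \<epsilon>)"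
    by blast
qed

lemma diagonal_closed_Liminf:
  fixes G :: "'a \<Rightarrow> real \<Rightarrow> 'b::complete_linorder"
  shows "diagonal_closed (\<lambda>m. Liminf (at_right 0) (\<lambda>\<epsilon>. G (m \<epsilon>) \<epsilon>))"
  unfolding diagonal_closed_def
proof (intro allI impI)
  fix ms :: "nat \<Rightarrow> real \<Rightarrow> 'a" and P :: "nat \<Rightarrow> real \<Rightarrow> bool" and c :: 'b
  assume ms: "\<forall>k. c < Liminf (at_right 0) (\<lambda>\<epsilon>. G (ms k \<epsilon>) \<epsilon>) \<and> eventually (P k) (at_right 0)"
  have "eventually (\<lambda>\<epsilon>. P k \<epsilon> \<and> c < G (ms k \<epsilon>) \<epsilon>) (at_right 0)" for k
    using ms less_LiminfD[of c "at_right 0" "\<lambda>\<epsilon>. G (ms k \<epsilon>) \<epsilon>"] by (simp add: eventually_conj)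
  then obtain idx
    where idx: "\<And>k. eventually (\<lambda>\<epsilon>. k \<le> idx \<epsilon> \<and> P (idx \<epsilon>) \<epsilon> \<and> c < G (ms (idx \<epsilon>) \<epsilon>) \<epsilon>) (at_right 0)"
    by (rule at_right_diagonal_index[of "\<lambda>k \<epsilon>. P k \<epsilon> \<and> c < G (ms k \<epsilon>) \<epsilon>" "\<lambda>_ _. True"]) auto
  have "c \<le> Liminf (at_right 0) (\<lambda>\<epsilon>. G (ms (idx \<epsilon>) \<epsilon>) \<epsilon>)"
    using idx[of 0] by (intro Liminf_bounded) (auto elim: eventually_mono)
  moreover have "eventually (\<lambda>\<epsilon>. k \<le> idx \<epsilon> \<and> P (idx \<epsilon>) \<epsilon>) (at_right 0)" for k
    using idx[of k] by (auto elim: eventually_mono)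
  ultimately show "\<exists>idx. (\<forall>k. eventually (\<lambda>\<epsilon>. k \<le> idx \<epsilon> \<and> P (idx \<epsilon>) \<epsilon>) (at_right 0)) \<and>
      c \<le> Liminf (at_right 0) (\<lambda>\<epsilon>. G (ms (idx \<epsilon>) \<epsilon>) \<epsilon>)"
    by blast
qed

section \<open>Upper semicontinuity of suprema over converging families\<close>

lemma first_countable_decseq_base:
  assumes "first_countable T" "x \<in> topspace T"
  obtains U :: "nat \<Rightarrow> 'a set"
  where "\<And>k. openin T (U k)" "\<And>k. x \<in> U k" "decseq U"
    "\<And>V. openin T V \<Longrightarrow> x \<in> V \<Longrightarrow> \<exists>k. U k \<subseteq> V"
proof -
  obtain \<B> where \<B>: "countable \<B>" "\<And>V. V \<in> \<B> \<Longrightarrow> openin T V"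
    "\<And>V. openin T V \<Longrightarrow> x \<in> V \<Longrightarrow> \<exists>W\<in>\<B>. x \<in> W \<and> W \<subseteq> V"
    using assms unfolding first_countable_def by metis
  define \<B>x where "\<B>x = {W \<in> \<B>. x \<in> W}"
  have "countable \<B>x" "\<B>x \<noteq> {}"
    using \<B>(1) \<B>(3)[OF openin_topspace assms(2)] by (auto simp: \<B>x_def)
  define A where "A = from_nat_into \<B>x"
  have A: "A i \<in> \<B>x" for i
    unfolding A_def using \<open>\<B>x \<noteq> {}\<close> by (rule from_nat_into)
  show ?thesis
  proof (rule that[of "\<lambda>n. \<Inter> (A ` {..n})"])
    show "openin T (\<Inter> (A ` {..n}))" for n
      using A \<B>(2) by (intro openin_Inter) (auto simp: \<B>x_def)
    show "x \<in> \<Inter> (A ` {..n})" for n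
      using A by (auto simp: \<B>x_def)
    show "decseq (\<lambda>n. \<Inter> (A ` {..n}))"
      by (auto simp: decseq_def)
    fix V assume "openin T V" "x \<in> V"
    then obtain W where "W \<in> \<B>x" "W \<subseteq> V"
      using \<B>(3) by (auto simp: \<B>x_def)
    then obtain i where "A i = W"
      unfolding A_def using from_nat_into_surj[OF \<open>countable \<B>x\<close>] by blast
    with \<open>W \<subseteq> V\<close> show "\<exists>k. \<Inter> (A ` {..k}) \<subseteq> V"
      by blast
  qed
qed

lemma limitin_decseq_base:
  assumes "x \<in> topspace T" "decseq U" "\<And>V. openin T V \<Longrightarrow> x \<in> V \<Longrightarrow> \<exists>k. U k \<subseteq> V"
    and "\<And>k. eventually (\<lambda>\<epsilon>. k \<le> idx \<epsilon> \<and> y \<epsilon> \<in> U (idx \<epsilon>)) F"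
  shows "limitin T y x F"
  unfolding limitin_def
proof (intro conjI allI impI)
  fix V assume "openin T V \<and> x \<in> V"
  then obtain k where "U k \<subseteq> V"
    using assms(3) by blast
  have "eventually (\<lambda>\<epsilon>. k \<le> idx \<epsilon> \<and> y \<epsilon> \<in> U (idx \<epsilon>)) F"
    by (rule assms(4))
  then show "eventually (\<lambda>\<epsilon>. y \<epsilon> \<in> V) F"
    by (rule eventually_mono) (use decseqD[OF assms(2)] \<open>U k \<subseteq> V\<close> in blast)
qed (rule assms(1))

definition converging_families :: "'a topology \<Rightarrow> 'a set \<Rightarrow> 'a \<Rightarrow> (real \<Rightarrow> 'a) set" where
  "converging_families T C \<mu> = {m. (\<forall>\<epsilon>>0. m \<epsilon> \<in> C) \<and> limitin T m \<mu> (at_right 0)}"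

lemma MG_eq_converging_families: "MG X act \<mu> = converging_families (weak_star X) (co_ergodic X act) \<mu>"
  by (simp add: MG_def converging_families_def)

lemma SUP_converging_families_diagonal_bound:
  fixes \<Phi> :: "(real \<Rightarrow> 'a) \<Rightarrow> ereal"
  assumes \<Phi>: "diagonal_closed \<Phi>" and \<mu>0: "\<mu>0 \<in> topspace T"
    and U: "\<And>k. openin T (U k)" "decseq U" "\<And>V. openin T V \<Longrightarrow> \<mu>0 \<in> V \<Longrightarrow> \<exists>k. U k \<subseteq> V"
    and \<mu>s: "\<And>k. \<mu>s k \<in> U k" "\<And>k. c < (SUP m \<in> converging_families T C (\<mu>s k). \<Phi> m)"
  shows "c \<le> (SUP m \<in> converging_families T C \<mu>0. \<Phi> m)"
proof -
  have "\<forall>k. \<exists>m. (\<forall>\<epsilon>>0. m \<epsilon> \<in> C) \<and> limitin T m (\<mu>s k) (at_right 0) \<and> c < \<Phi> m"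
    using \<mu>s(2) by (simp add: less_SUP_iff converging_families_def)
  then obtain ms where ms: "\<And>k \<epsilon>. \<epsilon> > 0 \<Longrightarrow> ms k \<epsilon> \<in> C" "\<And>k. c < \<Phi> (ms k)"
    and lim: "\<And>k. limitin T (ms k) (\<mu>s k) (at_right 0)"
    by (auto dest!: choice)
  have "eventually (\<lambda>\<epsilon>. ms k \<epsilon> \<in> U k) (at_right 0)" for k
    using lim[of k] U(1) \<mu>s(1) unfolding limitin_def by blast
  then obtain idx
    where idx: "\<And>k. eventually (\<lambda>\<epsilon>. k \<le> idx \<epsilon> \<and> ms (idx \<epsilon>) \<epsilon> \<in> U (idx \<epsilon>)) (at_right 0)"
      and c_le: "c \<le> \<Phi> (\<lambda>\<epsilon>. ms (idx \<epsilon>) \<epsilon>)"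
    by (rule diagonal_closedD[where ms = ms and P = "\<lambda>k \<epsilon>. ms k \<epsilon> \<in> U k", OF \<Phi> ms(2)]) blast
  have "limitin T (\<lambda>\<epsilon>. ms (idx \<epsilon>) \<epsilon>) \<mu>0 (at_right 0)"
    using \<mu>0 U(2,3) idx by (rule limitin_decseq_base)
  with ms(1) have "\<Phi> (\<lambda>\<epsilon>. ms (idx \<epsilon>) \<epsilon>) \<le> (SUP m \<in> converging_families T C \<mu>0. \<Phi> m)"
    by (intro SUP_upper) (auto simp: converging_families_def)
  with c_le show ?thesis
    by simp
qed

lemma usc_on_SUP_converging_families:
  fixes T :: "'a topology" and \<Phi> :: "(real \<Rightarrow> 'a) \<Rightarrow> ereal"
  assumes T: "first_countable T" and \<Phi>: "diagonal_closed \<Phi>"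
  shows "usc_on T (\<lambda>\<mu>. SUP m \<in> converging_families T C \<mu>. \<Phi> m)" (is "usc_on T ?f")
  unfolding usc_on_def
proof (intro allI openin_subopen[THEN iffD2] ballI)
  fix t \<mu>0 assume "\<mu>0 \<in> {\<mu> \<in> topspace T. ?f \<mu> < t}"
  then have \<mu>0: "\<mu>0 \<in> topspace T" "?f \<mu>0 < t"
    by auto
  obtain c where c: "?f \<mu>0 < c" "c < t"
    using dense[OF \<mu>0(2)] by blast
  obtain U where U: "\<And>k. openin T (U k)" "\<And>k. \<mu>0 \<in> U k" "decseq U"
    "\<And>V. openin T V \<Longrightarrow> \<mu>0 \<in> V \<Longrightarrow> \<exists>k. U k \<subseteq> V"
    using first_countable_decseq_base[OF T \<mu>0(1)] by metis
  have "\<exists>k. \<forall>\<mu>\<in>U k. ?f \<mu> < t"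
  proof (rule ccontr)
    assume "\<nexists>k. \<forall>\<mu>\<in>U k. ?f \<mu> < t"
    then have "\<forall>k. \<exists>\<mu>. \<mu> \<in> U k \<and> t \<le> ?f \<mu>"
      by (auto simp: not_less)
    then obtain \<mu>s where \<mu>s: "\<And>k. \<mu>s k \<in> U k" "\<And>k. t \<le> ?f (\<mu>s k)"
      by (auto dest!: choice)
    have "c \<le> ?f \<mu>0"
      using \<Phi> \<mu>0(1) U(1,3,4) \<mu>s(1) less_le_trans[OF c(2) \<mu>s(2)]
      by (rule SUP_converging_families_diagonal_bound)
    with c(1) show False
      by simp
  qed
  then obtain k where "\<forall>\<mu>\<in>U k. ?f \<mu> < t"
    by blast
  with U(1,2)[of k] show "\<exists>V. openin T V \<and> \<mu>0 \<in> V \<and> V \<subseteq> {\<mu> \<in> topspace T. ?f \<mu> < t}"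
    by (intro exI[of _ "U k"]) (auto dest: openin_subset)
qed

lemma usc_on_subtopology: "usc_on T f \<Longrightarrow> usc_on (subtopology T S) f"
  unfolding usc_on_def
proof
  fix t assume "\<forall>t. openin T {x \<in> topspace T. f x < t}"
  then have "openin (subtopology T S) ({x \<in> topspace T. f x < t} \<inter> S)"
    by (simp add: openin_subtopology_Int)
  moreover have "{x \<in> topspace T. f x < t} \<inter> S = {x \<in> topspace (subtopology T S). f x < t}"
    by auto
  ultimately show "openin (subtopology T S) {x \<in> topspace (subtopology T S). f x < t}"
    by simp
qed

theorem proposition3p26:
  fixes X :: "'x::metric_space set"
    and act :: "'g::{group_add, countable} \<Rightarrow> 'x \<Rightarrow> 'x"
    and Fs :: "nat \<Rightarrow> 'g set"
  assumes "infinite (UNIV :: 'g set)"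
    and "G_system X act"
    and "folner Fs"
    and "tempered Fs"
  shows "usc_on (subtopology (weak_star X) (invariant_measures X act)) (upper_mdim_M X act Fs) \<and>
         usc_on (subtopology (weak_star X) (invariant_measures X act)) (lower_mdim_M X act Fs)"
proof -
  have T: "first_countable (weak_star X)"
    using assms(2) by (intro first_countable_weak_star) (simp add: G_system_def)
  let ?G = "\<lambda>\<mu> \<epsilon>. ereal (F_eps X act Fs \<mu> \<epsilon> / ln (1 / \<epsilon>))"
  have "usc_on (weak_star X) (upper_mdim_M X act Fs)"
    unfolding upper_mdim_M_def MG_eq_converging_families
    by (rule usc_on_SUP_converging_families[OF T diagonal_closed_Limsup[where G = ?G]])
  moreover have "usc_on (weak_star X) (lower_mdim_M X act Fs)"
    unfolding lower_mdim_M_def MG_eq_converging_families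
    by (rule usc_on_SUP_converging_families[OF T diagonal_closed_Liminf[where G = ?G]])
  ultimately show ?thesis
    by (simp add: usc_on_subtopology)
qed

end
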